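(* Consider the model below with $M=M_f=N=1$ and $\epsilon_2\ge0$, and fix all parameters other than $\epsilon_1$. (i) There exists $\bar{\epsilon}_{RPE}\in[-\infty,\infty)$, depending only on the model parameters, such that for every $\epsilon_1\in\mathbb{R}$ a restricted perceptions equilibrium (RPE) exists if and only if $\epsilon_1\ge\bar{\epsilon}_{RPE}$; moreover $\bar{\epsilon}_{RPE}=-\infty$ if $q=1$. (ii) Let $\bar{\epsilon}_{REE}\in[-\infty,\infty)$ be the number such that a rational expectations equilibrium (REE) exists if and only if $\epsilon_1\ge\bar{\epsilon}_{REE}$. Then $\bar{\epsilon}_{REE}\ge\bar{\epsilon}_{RPE}$ if and only if $p+q\ge1$.
   Context: Parameters: $0<\beta<1$, $\sigma,\lambda,\mu>0$, $\psi>1$, $p,q\in(0,1]$ with $(p,q)\neq(1,1)$. The shock $\epsilon_t$ is a two-state Markov chain on $\{\epsilon_1,\epsilon_2\}$ with $\Pr(\epsilon_{t+1}=\epsilon_1\mid\epsilon_t=\epsilon_1)=p$, $\Pr(\epsilon_{t+1}=\epsilon_2\mid\epsilon_t=\epsilon_2)=q$; $\bar q:=(1-p)/(2-p-q)$ is the stationary probability of state 2. Model: $x_t=\hat E_t x_{t+1}-\sigma(i_t-\hat E_t\pi_{t+1})+\epsilon_t$, $\pi_t=\lambda x_t+\beta\hat E_t\pi_{t+1}$, $i_t=\max\{\psi\pi_t,-\mu\}$. For vectors $Y_j=(x_j,\pi_j)$, $j=1,2$, and forecasts $Y^e_j=(x^e_j,\pi^e_j)$, say $(Y_1,Y_2)$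 solves the model given $(Y^e_1,Y^e_2)$ if for $j=1,2$, with $i_j=\max\{\psi\pi_j,-\mu\}$, $x_j=x^e_j-\sigma(i_j-\pi^e_j)+\epsilon_j$ and $\pi_j=\lambda x_j+\beta\pi^e_j$. An REE is $(Y_1,Y_2)$ solving the model given $Y^e_1=pY_1+(1-p)Y_2$, $Y^e_2=(1-q)Y_1+qY_2$. An RPE is $(Y_1,Y_2)$ solving the model given $Y^e_1=Y^e_2=\bar Y:=\bar qY_2+(1-\bar q)Y_1$ (agents forecast with the unconditional mean, and the forecast equals the actual unconditional mean). *)

theory Defs
  imports Complex_Main "HOL-Library.Extended_Real"
begin

definition comb :: "real \<Rightarrow> real \<times> real \<Rightarrow> real \<times> real \<Rightarrow> real \<times> real" where
  "comb a Y1 Y2 = (a * fst Y1 + (1 - a) * fst Y2, a * snd Y1 + (1 - a) * snd Y2)"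

definition solves1 :: "real \<Rightarrow> real \<Rightarrow> real \<Rightarrow> real \<Rightarrow> real \<Rightarrow> real
    \<Rightarrow> real \<times> real \<Rightarrow> real \<times> real \<Rightarrow> bool" where
  "solves1 \<beta> \<sigma> \<kappa> \<mu> \<psi> eps Y Ye =
     (let x = fst Y; \<pi> = snd Y; xe = fst Ye; \<pi>e = snd Ye; i = max (\<psi> * \<pi>) (- \<mu>) in
        x = xe - \<sigma> * (i - \<pi>e) + eps \<and> \<pi> = \<kappa> * x + \<beta> * \<pi>e)"

definition solves :: "real \<Rightarrow> real \<Rightarrow> real \<Rightarrow> real \<Rightarrow> real \<Rightarrow> real \<Rightarrow> real
    \<Rightarrow> real \<times> real \<Rightarrow> real \<times> real \<Rightarrow> real \<times> real \<Rightarrow> real \<times> real \<Rightarrow> bool" where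
  "solves \<beta> \<sigma> \<kappa> \<mu> \<psi> \<epsilon>1 \<epsilon>2 Y1 Y2 Ye1 Ye2 =
     (solves1 \<beta> \<sigma> \<kappa> \<mu> \<psi> \<epsilon>1 Y1 Ye1 \<and> solves1 \<beta> \<sigma> \<kappa> \<mu> \<psi> \<epsilon>2 Y2 Ye2)"

text \<open>Stationary probability of state 2.\<close>
definition qbar :: "real \<Rightarrow> real \<Rightarrow> real" where
  "qbar p q = (1 - p) / (2 - p - q)"

definition REE :: "real \<Rightarrow> real \<Rightarrow> real \<Rightarrow> real \<Rightarrow> real \<Rightarrow> real \<Rightarrow> real \<Rightarrow> real \<Rightarrow> real
    \<Rightarrow> real \<times> real \<Rightarrow> real \<times> real \<Rightarrow> bool" where
  "REE \<beta> \<sigma> \<kappa> \<mu> \<psi> p q \<epsilon>1 \<epsilon>2 Y1 Y2 =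
     solves \<beta> \<sigma> \<kappa> \<mu> \<psi> \<epsilon>1 \<epsilon>2 Y1 Y2 (comb p Y1 Y2) (comb (1 - q) Y1 Y2)"

definition RPE :: "real \<Rightarrow> real \<Rightarrow> real \<Rightarrow> real \<Rightarrow> real \<Rightarrow> real \<Rightarrow> real \<Rightarrow> real \<Rightarrow> real
    \<Rightarrow> real \<times> real \<Rightarrow> real \<times> real \<Rightarrow> bool" where
  "RPE \<beta> \<sigma> \<kappa> \<mu> \<psi> p q \<epsilon>1 \<epsilon>2 Y1 Y2 =
     (let Ybar = comb (1 - qbar p q) Y1 Y2 in
      solves \<beta> \<sigma> \<kappa> \<mu> \<psi> \<epsilon>1 \<epsilon>2 Y1 Y2 Ybar Ybar)"

end

theory Submission
  imports Defs "HOL-Analysis.Elementary_Metric_Spaces"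
begin

text \<open>
  With the shadow rate \<open>y = \<psi> \<pi> + \<mu>\<close> the policy rate is \<open>max y 0 - \<mu>\<close>. For forecasts
  \<open>Y\<^sup>e\<^sub>1 = \<alpha> Y\<^sub>1 + (1 - \<alpha>) Y\<^sub>2\<close> and \<open>Y\<^sup>e\<^sub>2 = \<gamma> Y\<^sub>1 + (1 - \<gamma>) Y\<^sub>2\<close>, eliminating output
  through the Phillips curve leaves two piecewise linear equations in \<open>y\<^sub>1, y\<^sub>2\<close>. For the RPE
  and for the REE their coefficients are \<open>w c\<close> and \<open>(1 - w) c\<close> with the same \<open>w = qbar p q\<close>;
  only the slope \<open>c\<close> differs: \<open>1 + \<kappa>\<sigma>\<close> for the RPE, \<open>(2 - p - q)(1 - \<beta>(p + q - 1) + \<kappa>\<sigma>)\<close>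
  for the REE, and the difference of the two has the sign of \<open>p + q - 1\<close>.

  Apart from a degenerate REE case in which only necessity holds, the reduced system is solvable iff
  \<open>min (- \<kappa>\<sigma>(\<psi> - 1) X\<^sub>1) (\<kappa>\<sigma> X\<^sub>2) \<le> c ((1 - w) X\<^sub>1 + w X\<^sub>2)\<close> with
  \<open>X\<^sub>j = \<psi>\<kappa>\<epsilon>\<^sub>j + \<kappa>\<sigma>(\<psi> - 1)\<mu>\<close>. As a condition on \<open>\<epsilon>\<^sub>1\<close> it is closed and upward closed,
  which gives the threshold, and it always holds when \<open>w = 1\<close>, i.e. \<open>q = 1\<close>. It is monotone
  in \<open>c\<close>, strictly so when \<open>0 < w < 1\<close>; hence the REE set of shocks is contained in the RPE set,
  which is what comparing the thresholds amounts to, exactly when \<open>p + q \<ge> 1\<close>.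
\<close>

section \<open>Reduction to a system in the shadow rates\<close>

definition kink :: "real \<Rightarrow> real \<Rightarrow> real" where
  "kink \<psi> y = \<psi> * max y 0 - y"

definition reduced_system :: "real \<Rightarrow> real \<Rightarrow> real \<Rightarrow> real \<Rightarrow> real \<Rightarrow> real \<Rightarrow> real \<Rightarrow> real \<Rightarrow> bool" where
  "reduced_system s \<psi> c1 c2 X1 X2 y1 y2 \<longleftrightarrow>
     X1 = s * kink \<psi> y1 + c1 * (y1 - y2) \<and> X2 = s * kink \<psi> y2 - c2 * (y1 - y2)"

lemma IS_curve_iff_kink:
  fixes \<sigma> \<kappa> \<mu> \<psi> x xe \<pi> \<pi>e \<epsilon> :: real
  assumes "\<kappa> \<noteq> 0" "\<psi> \<noteq> 0"
  shows "x = xe - \<sigma> * (max (\<psi> * \<pi>) (- \<mu>) - \<pi>e) + \<epsilon> \<longleftrightarrow>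
    \<psi> * \<kappa> * \<epsilon> + \<kappa> * \<sigma> * (\<psi> - 1) * \<mu>
      = \<kappa> * \<sigma> * kink \<psi> (\<psi> * \<pi> + \<mu>) + (\<psi> * (\<kappa> * x - \<kappa> * xe) + \<kappa> * \<sigma> * \<psi> * (\<pi> - \<pi>e))"
proof -
  have "max (\<psi> * \<pi> + \<mu>) 0 = max (\<psi> * \<pi>) (- \<mu>) + \<mu>"
    by (simp add: max_def)
  then have "\<kappa> * \<sigma> * kink \<psi> (\<psi> * \<pi> + \<mu>)
      = \<psi> * \<kappa> * \<sigma> * max (\<psi> * \<pi>) (- \<mu>) + \<kappa> * \<sigma> * (\<psi> - 1) * \<mu> - \<kappa> * \<sigma> * \<psi> * \<pi>"
    unfolding kink_def by (simp add: algebra_simps)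
  moreover have "x = xe - \<sigma> * (max (\<psi> * \<pi>) (- \<mu>) - \<pi>e) + \<epsilon> \<longleftrightarrow>
      \<psi> * \<kappa> * x = \<psi> * \<kappa> * (xe - \<sigma> * (max (\<psi> * \<pi>) (- \<mu>) - \<pi>e) + \<epsilon>)"
    using assms by simp
  ultimately show ?thesis
    by (auto simp: algebra_simps)
qed

lemma solves_comb_iff:
  fixes \<beta> \<sigma> \<kappa> \<mu> \<psi> \<alpha> \<gamma> \<epsilon>1 \<epsilon>2 x1 x2 \<pi>1 \<pi>2 :: real
  assumes "\<kappa> \<noteq> 0" "\<psi> \<noteq> 0"
  defines "k \<equiv> 1 - \<beta> * (\<alpha> - \<gamma>) + \<kappa> * \<sigma>"
  shows "solves \<beta> \<sigma> \<kappa> \<mu> \<psi> \<epsilon>1 \<epsilon>2 (x1, \<pi>1) (x2, \<pi>2)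
           (comb \<alpha> (x1, \<pi>1) (x2, \<pi>2)) (comb \<gamma> (x1, \<pi>1) (x2, \<pi>2)) \<longleftrightarrow>
         \<kappa> * x1 = \<pi>1 - \<beta> * (\<alpha> * \<pi>1 + (1 - \<alpha>) * \<pi>2) \<and>
         \<kappa> * x2 = \<pi>2 - \<beta> * (\<gamma> * \<pi>1 + (1 - \<gamma>) * \<pi>2) \<and>
         reduced_system (\<kappa> * \<sigma>) \<psi> ((1 - \<alpha>) * k) (\<gamma> * k)
           (\<psi> * \<kappa> * \<epsilon>1 + \<kappa> * \<sigma> * (\<psi> - 1) * \<mu>) (\<psi> * \<kappa> * \<epsilon>2 + \<kappa> * \<sigma> * (\<psi> - 1) * \<mu>)
           (\<psi> * \<pi>1 + \<mu>) (\<psi> * \<pi>2 + \<mu>)"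
    (is "?solves \<longleftrightarrow> ?P1 \<and> ?P2 \<and> ?reduced")
proof (cases "?P1 \<and> ?P2")
  case True
  then have diff: "\<kappa> * x1 - \<kappa> * x2 = (1 - \<beta> * (\<alpha> - \<gamma>)) * (\<pi>1 - \<pi>2)"
    by (simp add: algebra_simps)
  have "\<psi> * (\<kappa> * x1 - \<kappa> * (\<alpha> * x1 + (1 - \<alpha>) * x2))
        + \<kappa> * \<sigma> * \<psi> * (\<pi>1 - (\<alpha> * \<pi>1 + (1 - \<alpha>) * \<pi>2))
      = (1 - \<alpha>) * \<psi> * ((\<kappa> * x1 - \<kappa> * x2) + \<kappa> * \<sigma> * (\<pi>1 - \<pi>2))" (is "?gap1 = _")
    by (simp add: algebra_simps)
  also have "\<dots> = (1 - \<alpha>) * k * ((\<psi> * \<pi>1 + \<mu>) - (\<psi> * \<pi>2 + \<mu>))"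
    unfolding diff k_def by (simp add: algebra_simps)
  finally have gap1: "?gap1 = (1 - \<alpha>) * k * ((\<psi> * \<pi>1 + \<mu>) - (\<psi> * \<pi>2 + \<mu>))" .
  have "\<psi> * (\<kappa> * x2 - \<kappa> * (\<gamma> * x1 + (1 - \<gamma>) * x2))
        + \<kappa> * \<sigma> * \<psi> * (\<pi>2 - (\<gamma> * \<pi>1 + (1 - \<gamma>) * \<pi>2))
      = - (\<gamma> * \<psi> * ((\<kappa> * x1 - \<kappa> * x2) + \<kappa> * \<sigma> * (\<pi>1 - \<pi>2)))" (is "?gap2 = _")
    by (simp add: algebra_simps)
  also have "\<dots> = - (\<gamma> * k * ((\<psi> * \<pi>1 + \<mu>) - (\<psi> * \<pi>2 + \<mu>)))"
    unfolding diff k_def by (simp add: algebra_simps)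
  finally have gap2: "?gap2 = - (\<gamma> * k * ((\<psi> * \<pi>1 + \<mu>) - (\<psi> * \<pi>2 + \<mu>)))" .
  from True show ?thesis
    unfolding solves_def solves1_def comb_def reduced_system_def Let_def fst_conv snd_conv
      IS_curve_iff_kink[OF assms(1,2)] gap1 gap2
    by (auto simp: algebra_simps)
next
  case False
  then show ?thesis
    unfolding solves_def solves1_def comb_def Let_def by (auto simp: algebra_simps)
qed

lemma ex_solves_comb_iff:
  fixes \<beta> \<sigma> \<kappa> \<mu> \<psi> \<alpha> \<gamma> \<epsilon>1 \<epsilon>2 :: real
  assumes "\<kappa> \<noteq> 0" "\<psi> \<noteq> 0"
  defines "k \<equiv> 1 - \<beta> * (\<alpha> - \<gamma>) + \<kappa> * \<sigma>"
  shows "(\<exists>Y1 Y2. solves \<beta> \<sigma> \<kappa> \<mu> \<psi> \<epsilon>1 \<epsilon>2 Y1 Y2 (comb \<alpha> Y1 Y2) (comb \<gamma> Y1 Y2)) \<longleftrightarrow>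
         (\<exists>y1 y2. reduced_system (\<kappa> * \<sigma>) \<psi> ((1 - \<alpha>) * k) (\<gamma> * k)
           (\<psi> * \<kappa> * \<epsilon>1 + \<kappa> * \<sigma> * (\<psi> - 1) * \<mu>) (\<psi> * \<kappa> * \<epsilon>2 + \<kappa> * \<sigma> * (\<psi> - 1) * \<mu>) y1 y2)"
    (is "?model \<longleftrightarrow> (\<exists>y1 y2. ?reduced y1 y2)")
proof
  assume ?model
  then obtain x1 \<pi>1 x2 \<pi>2 where
    "solves \<beta> \<sigma> \<kappa> \<mu> \<psi> \<epsilon>1 \<epsilon>2 (x1, \<pi>1) (x2, \<pi>2) (comb \<alpha> (x1, \<pi>1) (x2, \<pi>2)) (comb \<gamma> (x1, \<pi>1) (x2, \<pi>2))"
    by auto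
  then have "?reduced (\<psi> * \<pi>1 + \<mu>) (\<psi> * \<pi>2 + \<mu>)"
    unfolding solves_comb_iff[OF assms(1,2)] k_def by blast
  then show "\<exists>y1 y2. ?reduced y1 y2" by blast
next
  assume "\<exists>y1 y2. ?reduced y1 y2"
  then obtain y1 y2 where reduced: "?reduced y1 y2" by blast
  define \<pi>1 where "\<pi>1 = (y1 - \<mu>) / \<psi>"
  define \<pi>2 where "\<pi>2 = (y2 - \<mu>) / \<psi>"
  define x1 where "x1 = (\<pi>1 - \<beta> * (\<alpha> * \<pi>1 + (1 - \<alpha>) * \<pi>2)) / \<kappa>"
  define x2 where "x2 = (\<pi>2 - \<beta> * (\<gamma> * \<pi>1 + (1 - \<gamma>) * \<pi>2)) / \<kappa>"
  have "y1 = \<psi> * \<pi>1 + \<mu>" "y2 = \<psi> * \<pi>2 + \<mu>"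
    using assms(2) by (simp_all add: \<pi>1_def \<pi>2_def)
  with reduced assms(1) have "solves \<beta> \<sigma> \<kappa> \<mu> \<psi> \<epsilon>1 \<epsilon>2 (x1, \<pi>1) (x2, \<pi>2)
      (comb \<alpha> (x1, \<pi>1) (x2, \<pi>2)) (comb \<gamma> (x1, \<pi>1) (x2, \<pi>2))"
    unfolding solves_comb_iff[OF assms(1,2)] k_def by (simp add: x1_def x2_def)
  then show ?model by blast
qed

section \<open>Solvability of the reduced system\<close>

lemma kink_nonneg_arg: "0 \<le> y \<Longrightarrow> kink \<psi> y = (\<psi> - 1) * y"
  by (simp add: kink_def algebra_simps)

lemma kink_nonpos_arg: "y \<le> 0 \<Longrightarrow> kink \<psi> y = - y"
  by (simp add: kink_def)

lemma reduced_system_necessary: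
  fixes s \<psi> c1 c2 X E y1 y2 :: real
  assumes "0 < s" "1 < \<psi>" "0 \<le> c1" "0 \<le> c2"
    and reduced: "reduced_system s \<psi> c1 c2 X E y1 y2"
  shows "min (- (s * (\<psi> - 1) * X)) (s * E) \<le> c2 * X + c1 * E"
proof -
  define Q where "Q = (\<psi> - 1) * (s - c1) + c2"
  have X: "X = s * kink \<psi> y1 + c1 * (y1 - y2)" and E: "E = s * kink \<psi> y2 - c2 * (y1 - y2)"
    using reduced by (simp_all add: reduced_system_def)
  consider "0 \<le> y1" | "y1 < 0" "0 \<le> y2" | "y1 < 0" "y2 < 0" by linarith
  then show ?thesis
  proof cases
    case 1
    have "c2 * X + c1 * E + s * (\<psi> - 1) * X
        = s * ((\<psi> - 1) * y1 * (s * (\<psi> - 1) + c1 + c2) + c1 * \<psi> * (max y2 0 - y2))"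
      using 1 unfolding X E kink_def by (simp add: algebra_simps)
    also have "\<dots> \<ge> 0"
      using 1 assms(1-4) by (simp add: add_nonneg_nonneg)
    finally show ?thesis by linarith
  next
    case 2
    have "c2 * X + c1 * E + s * (\<psi> - 1) * X = s * (- y1) * Q"
      and "c2 * X + c1 * E - s * E = s * y2 * (- Q)"
      using 2 unfolding X E Q_def by (simp_all add: kink_nonneg_arg kink_nonpos_arg algebra_simps)
    moreover have "0 \<le> s * (- y1) * Q \<or> 0 \<le> s * y2 * (- Q)"
      using 2 \<open>0 < s\<close> by (cases "0 \<le> Q") (simp_all add: mult_le_0_iff)
    ultimately show ?thesis by linarith
  next
    case 3
    have "c2 * X + c1 * E + s * (\<psi> - 1) * X = s * ((- y1) * Q + c1 * \<psi> * (- y2))"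
      and "c2 * X + c1 * E - s * E = s * (- y2) * (c1 + c2 - s)"
      using 3 unfolding X E Q_def by (simp_all add: kink_nonpos_arg algebra_simps)
    moreover have "0 \<le> s * ((- y1) * Q + c1 * \<psi> * (- y2)) \<or> 0 \<le> s * (- y2) * (c1 + c2 - s)"
    proof (cases "s \<le> c1 + c2")
      case False
      then have "0 \<le> Q" using assms(2,4) unfolding Q_def by simp
      then show ?thesis
        using 3 assms(1-3) by (intro disjI1 mult_nonneg_nonneg add_nonneg_nonneg) simp_all
    qed (use 3 assms(1) in \<open>simp add: mult_le_0_iff\<close>)
    ultimately show ?thesis by linarith
  qed
qed

lemma reduced_system_solvable_unconstrained:
  fixes s \<psi> c1 c2 X E :: real
  assumes "0 < s" "1 < \<psi>" "0 \<le> c1" "0 \<le> c2" "0 \<le> E"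
    and "- (s * (\<psi> - 1) * X) \<le> c2 * X + c1 * E"
  shows "\<exists>y1 y2. reduced_system s \<psi> c1 c2 X E y1 y2"
proof -
  define a where "a = s * (\<psi> - 1)"
  define L where "L = (a + c2) * X + c1 * E"
  have "0 < a"
    using assms(1,2) by (simp add: a_def)
  then have G: "0 < a * (a + c1 + c2)" and A: "0 < a + c2"
    using assms(3,4) by simp_all
  have "0 \<le> L"
    using assms(6) by (simp add: a_def L_def algebra_simps)
  define y1 where "y1 = L / (a * (a + c1 + c2))"
  define y2 where "y2 = (E + c2 * y1) / (a + c2)"
  have "0 \<le> y1" "0 \<le> y2"
    using G A \<open>0 \<le> L\<close> assms(4,5) by (simp_all add: y1_def y2_def)
  have y1: "a * (a + c1 + c2) * y1 = L" and y2: "(a + c2) * y2 = E + c2 * y1"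
    using G A by (simp_all add: y1_def y2_def del: mult_eq_0_iff)
  have "(a + c2) * (a * y1 + c1 * (y1 - y2)) = a * (a + c1 + c2) * y1 - c1 * ((a + c2) * y2 - c2 * y1)"
    by (simp add: algebra_simps)
  also have "\<dots> = (a + c2) * X"
    unfolding y1 y2 L_def by (simp add: algebra_simps)
  finally have "X = a * y1 + c1 * (y1 - y2)"
    using A by simp
  moreover have "E = a * y2 - c2 * (y1 - y2)"
    using y2 by (simp add: algebra_simps)
  ultimately have "reduced_system s \<psi> c1 c2 X E y1 y2"
    using \<open>0 \<le> y1\<close> \<open>0 \<le> y2\<close> by (simp add: reduced_system_def kink_nonneg_arg a_def algebra_simps)
  then show ?thesis by blast
qed

text \<open>In the regime \<open>y\<^sub>1 \<le> 0 \<le> y\<^sub>2\<close> the reduced system is linear with determinant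
  \<open>- s ((\<psi> - 1)(s - c\<^sub>1) + c\<^sub>2)\<close>.\<close>
lemma zlb_regime_coeff_neg:
  fixes s \<psi> c1 c2 X E :: real
  assumes "0 < s" "1 < \<psi>" "0 \<le> c2" "0 < c2 \<or> s < c1" "0 < E"
    and L: "(s * (\<psi> - 1) + c2) * X + c1 * E < 0" and M: "0 \<le> c2 * X + (c1 - s) * E"
  shows "(\<psi> - 1) * (s - c1) + c2 < 0"
proof (cases "c2 = 0")
  case True
  then show ?thesis using assms(2,4) by (simp add: mult_pos_neg)
next
  case False
  then have "c2 * ((s * (\<psi> - 1) + c2) * X + c1 * E) < 0"
    using assms(3) L by (simp add: mult_pos_neg)
  moreover have "c2 * ((s * (\<psi> - 1) + c2) * X + c1 * E)
      = (s * (\<psi> - 1) + c2) * (c2 * X + (c1 - s) * E) + s * ((\<psi> - 1) * (s - c1) + c2) * E"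
    by (simp add: algebra_simps)
  moreover have "0 \<le> (s * (\<psi> - 1) + c2) * (c2 * X + (c1 - s) * E)"
    using assms(1-3) M by simp
  ultimately have "s * ((\<psi> - 1) * (s - c1) + c2) * E < 0"
    by linarith
  then show ?thesis
    using assms(1,5) by (simp add: mult_less_0_iff)
qed

lemma reduced_system_solvable_zlb:
  fixes s \<psi> c1 c2 X E :: real
  assumes "0 < s" "1 < \<psi>" "0 \<le> c2" "0 < c2 \<or> s < c1" "0 < E"
    and "c2 * X + c1 * E < - (s * (\<psi> - 1) * X)" "s * E \<le> c2 * X + c1 * E"
  shows "\<exists>y1 y2. reduced_system s \<psi> c1 c2 X E y1 y2"
proof -
  define a where "a = s * (\<psi> - 1)"
  define Q where "Q = (\<psi> - 1) * (s - c1) + c2"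
  define L where "L = (a + c2) * X + c1 * E"
  define M where "M = c2 * X + (c1 - s) * E"
  have "L < 0" "0 \<le> M"
    using assms(6,7) by (simp_all add: L_def M_def a_def algebra_simps)
  have identity: "c2 * L = (a + c2) * M + s * Q * E"
    by (simp add: L_def M_def a_def Q_def algebra_simps)
  have "Q < 0"
    unfolding Q_def using zlb_regime_coeff_neg assms \<open>L < 0\<close> \<open>0 \<le> M\<close>
    by (simp add: L_def M_def a_def)
  then have sQ: "s * Q < 0"
    using assms(1) by (simp add: mult_pos_neg)
  define y1 where "y1 = - L / (s * Q)"
  define y2 where "y2 = - M / (s * Q)"
  have "y1 \<le> 0" "0 \<le> y2"
    using sQ \<open>L < 0\<close> \<open>0 \<le> M\<close> by (simp_all add: y1_def y2_def divide_nonneg_neg divide_neg_neg less_imp_le)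
  have y1: "s * Q * y1 = - L" and y2: "s * Q * y2 = - M"
    using assms(1) \<open>Q < 0\<close> by (simp_all add: y1_def y2_def)
  have "s * Q * (- s * y1 + c1 * (y1 - y2)) = - s * (s * Q * y1) + c1 * (s * Q * y1 - s * Q * y2)"
    by (simp add: algebra_simps)
  also have "\<dots> = s * Q * X"
    unfolding y1 y2 by (simp add: L_def M_def a_def Q_def algebra_simps)
  finally have X: "X = - s * y1 + c1 * (y1 - y2)"
    using assms(1) \<open>Q < 0\<close> by simp
  have "s * Q * (a * y2 - c2 * (y1 - y2)) = a * (s * Q * y2) - c2 * (s * Q * y1 - s * Q * y2)"
    by (simp add: algebra_simps)
  also have "\<dots> = s * Q * E"
    unfolding y1 y2 using identity by (simp add: algebra_simps)
  finally have "E = a * y2 - c2 * (y1 - y2)"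
    using assms(1) \<open>Q < 0\<close> by simp
  with X have "reduced_system s \<psi> c1 c2 X E y1 y2"
    using \<open>y1 \<le> 0\<close> \<open>0 \<le> y2\<close>
    by (simp add: reduced_system_def kink_nonneg_arg kink_nonpos_arg a_def algebra_simps)
  then show ?thesis by blast
qed

lemma ex_reduced_system_iff:
  fixes s \<psi> c1 c2 X E :: real
  assumes "0 < s" "1 < \<psi>" "0 \<le> c1" "0 \<le> c2" "0 < c2 \<or> s < c1" "0 < E"
  shows "(\<exists>y1 y2. reduced_system s \<psi> c1 c2 X E y1 y2) \<longleftrightarrow>
         min (- (s * (\<psi> - 1) * X)) (s * E) \<le> c2 * X + c1 * E"
proof
  assume "min (- (s * (\<psi> - 1) * X)) (s * E) \<le> c2 * X + c1 * E"
  then consider "- (s * (\<psi> - 1) * X) \<le> c2 * X + c1 * E"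
    | "c2 * X + c1 * E < - (s * (\<psi> - 1) * X)" "s * E \<le> c2 * X + c1 * E"
    by linarith
  then show "\<exists>y1 y2. reduced_system s \<psi> c1 c2 X E y1 y2"
    by cases (use reduced_system_solvable_unconstrained reduced_system_solvable_zlb assms in \<open>simp_all add: less_imp_le\<close>)
qed (use reduced_system_necessary assms in blast)

text \<open>The two arguments of the minimum correspond to the two regimes of the reduced system:
  the lower bound slack in both states, and binding in state 1 only.\<close>
definition equilibrium_condition :: "real \<Rightarrow> real \<Rightarrow> real \<Rightarrow> real \<Rightarrow> real \<Rightarrow> real \<Rightarrow> bool" where
  "equilibrium_condition s \<psi> c w X E \<longleftrightarrow> min (- (s * (\<psi> - 1) * X)) (s * E) \<le> c * ((1 - w) * X + w * E)"

lemma equilibrium_condition_imp_mean_nonneg: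
  fixes s \<psi> c w X E :: real
  assumes "0 < s" "1 < \<psi>" "0 \<le> c" "0 \<le> w" "w \<le> 1" "0 < E"
    and "equilibrium_condition s \<psi> c w X E"
  shows "0 \<le> (1 - w) * X + w * E"
proof (rule ccontr)
  assume "\<not> 0 \<le> (1 - w) * X + w * E"
  moreover have "0 \<le> w * E"
    using assms(4,6) by simp
  ultimately have "(1 - w) * X < 0"
    by linarith
  then have "X < 0"
    using assms(5) by (simp add: mult_less_0_iff)
  then have "0 < min (- (s * (\<psi> - 1) * X)) (s * E)"
    using assms(1,2,6) by (simp add: mult_pos_neg)
  moreover have "c * ((1 - w) * X + w * E) \<le> 0"
    using assms(3) \<open>\<not> 0 \<le> (1 - w) * X + w * E\<close> by (simp add: mult_nonneg_nonpos)
  ultimately show False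
    using assms(7) unfolding equilibrium_condition_def by linarith
qed

lemma equilibrium_condition_mono_coeff:
  fixes s \<psi> c c' w X E :: real
  assumes "0 < s" "1 < \<psi>" "0 \<le> c" "c \<le> c'" "0 \<le> w" "w \<le> 1" "0 < E"
    and "equilibrium_condition s \<psi> c w X E"
  shows "equilibrium_condition s \<psi> c' w X E"
proof -
  have "0 \<le> (1 - w) * X + w * E"
    using equilibrium_condition_imp_mean_nonneg assms by blast
  with assms(4) have "c * ((1 - w) * X + w * E) \<le> c' * ((1 - w) * X + w * E)"
    by (rule mult_right_mono)
  then show ?thesis
    using assms(8) by (simp add: equilibrium_condition_def)
qed

lemma equilibrium_condition_mono:
  fixes s \<psi> c w X X' E :: real
  assumes "0 < s" "1 < \<psi>" "0 \<le> c" "w \<le> 1" "X \<le> X'"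
    and "equilibrium_condition s \<psi> c w X E"
  shows "equilibrium_condition s \<psi> c w X' E"
proof -
  have "- (s * (\<psi> - 1) * X') \<le> - (s * (\<psi> - 1) * X)"
    using assms(1,2,5) by simp
  moreover have "c * ((1 - w) * X + w * E) \<le> c * ((1 - w) * X' + w * E)"
    using assms(3-5) by (simp add: mult_left_mono)
  ultimately show ?thesis
    using assms(6) unfolding equilibrium_condition_def by linarith
qed

lemma equilibrium_condition_zero:
  fixes s \<psi> c w E :: real
  assumes "0 \<le> c" "0 \<le> w" "0 \<le> E"
  shows "equilibrium_condition s \<psi> c w 0 E"
  using assms by (simp add: equilibrium_condition_def min_le_iff_disj)

lemma equilibrium_condition_full_weight:
  fixes s \<psi> c X E :: real
  assumes "s \<le> c" "0 \<le> E"
  shows "equilibrium_condition s \<psi> c 1 X E"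
  using assms by (simp add: equilibrium_condition_def min_le_iff_disj mult_right_mono)

lemma closed_equilibrium_condition_affine:
  fixes s \<psi> c w E A B :: real
  shows "closed {x. equilibrium_condition s \<psi> c w (A * x + B) E}"
  unfolding equilibrium_condition_def
  by (intro closed_Collect_le continuous_intros)

lemma equilibrium_condition_strict_mono_coeff:
  fixes s \<psi> c c' w E :: real
  assumes "0 < s" "1 < \<psi>" "0 \<le> c" "c < c'" "0 < w" "w < 1" "0 < E"
  shows "\<exists>X. equilibrium_condition s \<psi> c' w X E \<and> \<not> equilibrium_condition s \<psi> c w X E"
proof -
  define g where "g X = c' * ((1 - w) * X + w * E) - min (- (s * (\<psi> - 1) * X)) (s * E)" for X
  define X0 where "X0 = - (w * E / (1 - w))"
  have mean_X0: "(1 - w) * X0 + w * E = 0"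
    using assms(6) by (simp add: X0_def)
  have "X0 < 0"
    using assms(5-7) by (simp add: X0_def)
  then have "g X0 < 0"
    using assms(1,2,7) by (simp add: g_def mean_X0 mult_pos_neg)
  moreover have "0 \<le> g 0"
    using assms(3-5,7) by (simp add: g_def min_le_iff_disj)
  moreover have "continuous_on {X0..0} g"
    unfolding g_def by (intro continuous_intros)
  ultimately obtain X where "X0 \<le> X" "g X = 0"
    using IVT'[of g X0 0 0] \<open>X0 < 0\<close> by auto
  with \<open>g X0 < 0\<close> have "X0 < X"
    by (cases "X = X0") auto
  then have "(1 - w) * X0 < (1 - w) * X"
    using assms(6) by simp
  then have "0 < (1 - w) * X + w * E"
    using mean_X0 by linarith
  with assms(4) have "c * ((1 - w) * X + w * E) < c' * ((1 - w) * X + w * E)"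
    by (rule mult_strict_right_mono)
  with \<open>g X = 0\<close> show ?thesis
    unfolding equilibrium_condition_def g_def by (intro exI[of _ X]) linarith
qed

text \<open>Sufficiency needs \<open>w < 1 \<or> \<kappa>\<sigma> < c\<close>, which fails for the REE with \<open>q = 1\<close> when \<open>p\<close>
  is close to 1; there only necessity is available.\<close>
lemma ex_solves_comb_imp_condition:
  fixes \<beta> \<sigma> \<kappa> \<mu> \<psi> \<alpha> \<gamma> c w \<epsilon>1 \<epsilon>2 :: real
  assumes "0 < \<kappa>" "0 < \<sigma>" "1 < \<psi>" "0 \<le> c" "0 \<le> w" "w \<le> 1"
    and "(1 - \<alpha>) * (1 - \<beta> * (\<alpha> - \<gamma>) + \<kappa> * \<sigma>) = w * c"
    and "\<gamma> * (1 - \<beta> * (\<alpha> - \<gamma>) + \<kappa> * \<sigma>) = (1 - w) * c"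
    and "\<exists>Y1 Y2. solves \<beta> \<sigma> \<kappa> \<mu> \<psi> \<epsilon>1 \<epsilon>2 Y1 Y2 (comb \<alpha> Y1 Y2) (comb \<gamma> Y1 Y2)"
  shows "equilibrium_condition (\<kappa> * \<sigma>) \<psi> c w
           (\<psi> * \<kappa> * \<epsilon>1 + \<kappa> * \<sigma> * (\<psi> - 1) * \<mu>) (\<psi> * \<kappa> * \<epsilon>2 + \<kappa> * \<sigma> * (\<psi> - 1) * \<mu>)"
proof -
  obtain y1 y2 where red: "reduced_system (\<kappa> * \<sigma>) \<psi> (w * c) ((1 - w) * c)
      (\<psi> * \<kappa> * \<epsilon>1 + \<kappa> * \<sigma> * (\<psi> - 1) * \<mu>) (\<psi> * \<kappa> * \<epsilon>2 + \<kappa> * \<sigma> * (\<psi> - 1) * \<mu>) y1 y2"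
    using assms(9) ex_solves_comb_iff[of \<kappa> \<psi>] assms(1,3,7,8) by auto
  have "min (- (\<kappa> * \<sigma> * (\<psi> - 1) * (\<psi> * \<kappa> * \<epsilon>1 + \<kappa> * \<sigma> * (\<psi> - 1) * \<mu>)))
      (\<kappa> * \<sigma> * (\<psi> * \<kappa> * \<epsilon>2 + \<kappa> * \<sigma> * (\<psi> - 1) * \<mu>))
    \<le> (1 - w) * c * (\<psi> * \<kappa> * \<epsilon>1 + \<kappa> * \<sigma> * (\<psi> - 1) * \<mu>)
      + w * c * (\<psi> * \<kappa> * \<epsilon>2 + \<kappa> * \<sigma> * (\<psi> - 1) * \<mu>)"
    by (rule reduced_system_necessary[OF _ _ _ _ red]) (use assms(1-6) in simp_all)
  then show ?thesis
    by (simp add: equilibrium_condition_def algebra_simps)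
qed

lemma ex_solves_comb_iff_condition:
  fixes \<beta> \<sigma> \<kappa> \<mu> \<psi> \<alpha> \<gamma> c w \<epsilon>1 \<epsilon>2 :: real
  assumes "0 < \<kappa>" "0 < \<sigma>" "1 < \<psi>" "0 < \<mu>" "0 \<le> \<epsilon>2" "0 < c" "0 \<le> w" "w \<le> 1"
    and "w < 1 \<or> \<kappa> * \<sigma> < c"
    and "(1 - \<alpha>) * (1 - \<beta> * (\<alpha> - \<gamma>) + \<kappa> * \<sigma>) = w * c"
    and "\<gamma> * (1 - \<beta> * (\<alpha> - \<gamma>) + \<kappa> * \<sigma>) = (1 - w) * c"
  shows "(\<exists>Y1 Y2. solves \<beta> \<sigma> \<kappa> \<mu> \<psi> \<epsilon>1 \<epsilon>2 Y1 Y2 (comb \<alpha> Y1 Y2) (comb \<gamma> Y1 Y2)) \<longleftrightarrow>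
         equilibrium_condition (\<kappa> * \<sigma>) \<psi> c w
           (\<psi> * \<kappa> * \<epsilon>1 + \<kappa> * \<sigma> * (\<psi> - 1) * \<mu>) (\<psi> * \<kappa> * \<epsilon>2 + \<kappa> * \<sigma> * (\<psi> - 1) * \<mu>)"
proof -
  let ?X1 = "\<psi> * \<kappa> * \<epsilon>1 + \<kappa> * \<sigma> * (\<psi> - 1) * \<mu>"
  let ?X2 = "\<psi> * \<kappa> * \<epsilon>2 + \<kappa> * \<sigma> * (\<psi> - 1) * \<mu>"
  have "0 < ?X2"
    using assms(1-5) by (simp add: add_nonneg_pos)
  moreover have "0 < (1 - w) * c \<or> \<kappa> * \<sigma> < w * c"
    using assms(6,8,9) by (cases "w = 1") auto
  moreover have "(\<exists>Y1 Y2. solves \<beta> \<sigma> \<kappa> \<mu> \<psi> \<epsilon>1 \<epsilon>2 Y1 Y2 (comb \<alpha> Y1 Y2) (comb \<gamma> Y1 Y2)) \<longleftrightarrow>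
      (\<exists>y1 y2. reduced_system (\<kappa> * \<sigma>) \<psi> (w * c) ((1 - w) * c) ?X1 ?X2 y1 y2)"
    using ex_solves_comb_iff[of \<kappa> \<psi> \<beta> \<sigma> \<mu> \<epsilon>1 \<epsilon>2 \<alpha> \<gamma>] assms(1,3)
    unfolding assms(10,11) by simp
  ultimately show ?thesis
    using ex_reduced_system_iff[of "\<kappa> * \<sigma>" \<psi> "w * c" "(1 - w) * c" ?X2 ?X1] assms(1-3,6-8)
    by (simp add: equilibrium_condition_def algebra_simps)
qed

section \<open>Equilibrium thresholds\<close>

lemma qbar_weights:
  fixes p q :: real
  assumes "p + q \<noteq> 2"
  shows "qbar p q * (2 - p - q) = 1 - p" "(1 - qbar p q) * (2 - p - q) = 1 - q"
  using assms by (simp_all add: qbar_def field_simps)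

lemma qbar_bounds:
  fixes p q :: real
  assumes "p \<le> 1" "q \<le> 1" "(p, q) \<noteq> (1, 1)"
  shows "0 \<le> qbar p q" "qbar p q \<le> 1"
  using assms by (auto simp: qbar_def divide_le_eq_1)

lemma qbar_pos:
  fixes p q :: real
  assumes "p < 1" "q \<le> 1"
  shows "0 < qbar p q"
  using assms by (simp add: qbar_def)

lemma qbar_less_1:
  fixes p q :: real
  assumes "p \<le> 1" "q < 1"
  shows "qbar p q < 1"
  using assms by (simp add: qbar_def divide_less_eq_1)

lemma qbar_q_eq_1:
  fixes p :: real
  assumes "p < 1"
  shows "qbar p 1 = 1"
  using assms by (simp add: qbar_def)

lemma ex_RPE_iff:
  fixes \<beta> \<sigma> \<kappa> \<mu> \<psi> p q \<epsilon>1 \<epsilon>2 :: real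
  assumes "0 < \<kappa>" "0 < \<sigma>" "1 < \<psi>" "0 < \<mu>" "0 \<le> \<epsilon>2" "0 \<le> qbar p q" "qbar p q \<le> 1"
  shows "(\<exists>Y1 Y2. RPE \<beta> \<sigma> \<kappa> \<mu> \<psi> p q \<epsilon>1 \<epsilon>2 Y1 Y2) \<longleftrightarrow>
         equilibrium_condition (\<kappa> * \<sigma>) \<psi> (1 + \<kappa> * \<sigma>) (qbar p q)
           (\<psi> * \<kappa> * \<epsilon>1 + \<kappa> * \<sigma> * (\<psi> - 1) * \<mu>) (\<psi> * \<kappa> * \<epsilon>2 + \<kappa> * \<sigma> * (\<psi> - 1) * \<mu>)"
  unfolding RPE_def Let_def
  by (rule ex_solves_comb_iff_condition) (use assms in \<open>auto simp: add_pos_pos\<close>)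

lemma REE_coeff_pos:
  fixes \<beta> \<sigma> \<kappa> p q :: real
  assumes "0 \<le> \<beta>" "\<beta> < 1" "0 < \<kappa>" "0 < \<sigma>" "p \<le> 1" "q \<le> 1" "(p, q) \<noteq> (1, 1)"
  shows "0 < (2 - p - q) * (1 - \<beta> * (p + q - 1) + \<kappa> * \<sigma>)"
proof -
  have "\<beta> * (p + q - 1) \<le> \<beta>"
    using mult_left_mono[of "p + q - 1" 1 \<beta>] assms(1,5,6) by simp
  moreover have "0 < 2 - p - q"
    using assms(5-7) by auto
  ultimately show ?thesis
    using assms(2-4) by (simp add: add_pos_pos)
qed

lemma REE_weights:
  fixes \<beta> \<sigma> \<kappa> p q :: real
  assumes "p + q \<noteq> 2"
  shows "(1 - p) * (1 - \<beta> * (p - (1 - q)) + \<kappa> * \<sigma>)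
      = qbar p q * ((2 - p - q) * (1 - \<beta> * (p + q - 1) + \<kappa> * \<sigma>))"
    and "(1 - q) * (1 - \<beta> * (p - (1 - q)) + \<kappa> * \<sigma>)
      = (1 - qbar p q) * ((2 - p - q) * (1 - \<beta> * (p + q - 1) + \<kappa> * \<sigma>))"
proof -
  have k: "1 - \<beta> * (p - (1 - q)) + \<kappa> * \<sigma> = 1 - \<beta> * (p + q - 1) + \<kappa> * \<sigma>"
    by simp
  show "(1 - p) * (1 - \<beta> * (p - (1 - q)) + \<kappa> * \<sigma>)
      = qbar p q * ((2 - p - q) * (1 - \<beta> * (p + q - 1) + \<kappa> * \<sigma>))"
    and "(1 - q) * (1 - \<beta> * (p - (1 - q)) + \<kappa> * \<sigma>)
      = (1 - qbar p q) * ((2 - p - q) * (1 - \<beta> * (p + q - 1) + \<kappa> * \<sigma>))"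
    unfolding k by (simp_all only: qbar_weights[OF assms, symmetric] mult.assoc)
qed

lemma ex_REE_imp_condition:
  fixes \<beta> \<sigma> \<kappa> \<mu> \<psi> p q \<epsilon>1 \<epsilon>2 :: real
  assumes "0 \<le> \<beta>" "\<beta> < 1" "0 < \<kappa>" "0 < \<sigma>" "1 < \<psi>" "p \<le> 1" "q \<le> 1" "(p, q) \<noteq> (1, 1)"
    and "\<exists>Y1 Y2. REE \<beta> \<sigma> \<kappa> \<mu> \<psi> p q \<epsilon>1 \<epsilon>2 Y1 Y2"
  shows "equilibrium_condition (\<kappa> * \<sigma>) \<psi> ((2 - p - q) * (1 - \<beta> * (p + q - 1) + \<kappa> * \<sigma>)) (qbar p q)
           (\<psi> * \<kappa> * \<epsilon>1 + \<kappa> * \<sigma> * (\<psi> - 1) * \<mu>) (\<psi> * \<kappa> * \<epsilon>2 + \<kappa> * \<sigma> * (\<psi> - 1) * \<mu>)"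
proof (rule ex_solves_comb_imp_condition)
  have "p + q \<noteq> 2"
    using assms(6-8) by auto
  then show "(1 - p) * (1 - \<beta> * (p - (1 - q)) + \<kappa> * \<sigma>)
      = qbar p q * ((2 - p - q) * (1 - \<beta> * (p + q - 1) + \<kappa> * \<sigma>))"
    and "(1 - q) * (1 - \<beta> * (p - (1 - q)) + \<kappa> * \<sigma>)
      = (1 - qbar p q) * ((2 - p - q) * (1 - \<beta> * (p + q - 1) + \<kappa> * \<sigma>))"
    by (rule REE_weights)+
qed (use assms REE_coeff_pos qbar_bounds in \<open>auto simp: REE_def less_imp_le\<close>)

lemma ex_REE_iff:
  fixes \<beta> \<sigma> \<kappa> \<mu> \<psi> p q \<epsilon>1 \<epsilon>2 :: real
  assumes "0 \<le> \<beta>" "\<beta> < 1" "0 < \<kappa>" "0 < \<sigma>" "1 < \<psi>" "0 < \<mu>" "0 \<le> \<epsilon>2" "p \<le> 1" "q < 1"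
  shows "(\<exists>Y1 Y2. REE \<beta> \<sigma> \<kappa> \<mu> \<psi> p q \<epsilon>1 \<epsilon>2 Y1 Y2) \<longleftrightarrow>
         equilibrium_condition (\<kappa> * \<sigma>) \<psi> ((2 - p - q) * (1 - \<beta> * (p + q - 1) + \<kappa> * \<sigma>)) (qbar p q)
           (\<psi> * \<kappa> * \<epsilon>1 + \<kappa> * \<sigma> * (\<psi> - 1) * \<mu>) (\<psi> * \<kappa> * \<epsilon>2 + \<kappa> * \<sigma> * (\<psi> - 1) * \<mu>)"
proof -
  have "p + q \<noteq> 2"
    using assms(8,9) by auto
  then show ?thesis
    unfolding REE_def using assms REE_coeff_pos[of \<beta> \<kappa> \<sigma> p q] qbar_bounds[of p q] qbar_less_1[of p q]
    by (intro ex_solves_comb_iff_condition) (simp_all add: REE_weights)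
qed

lemma ereal_threshold_exists:
  fixes S :: "real set"
  assumes "closed S" "S \<noteq> {}" and up: "\<And>x y. x \<in> S \<Longrightarrow> x \<le> y \<Longrightarrow> y \<in> S"
  shows "\<exists>e. e < \<infinity> \<and> (\<forall>x. x \<in> S \<longleftrightarrow> e \<le> ereal x)"
proof (intro exI conjI allI iffI)
  let ?e = "INF x\<in>S. ereal x"
  obtain x0 where "x0 \<in> S"
    using assms(2) by blast
  then show "?e < \<infinity>"
    by (rule le_less_trans[OF INF_lower]) simp_all
  show "?e \<le> ereal x" if "x \<in> S" for x
    using that by (rule INF_lower)
  show "x \<in> S" if "?e \<le> ereal x" for x
  proof (rule ccontr)
    assume "x \<notin> S"
    then have below: "x < y" if "y \<in> S" for y
      using up[OF that] \<open>x \<notin> S\<close> by (meson not_less)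
    then have "bdd_below S"
      by (meson bdd_below.I less_imp_le)
    then have "Inf S \<in> S" and Inf: "ereal (Inf S) = ?e"
      using assms(1,2) by (simp_all add: closed_contains_Inf ereal_Inf')
    then have "ereal x < ?e"
      unfolding Inf[symmetric] using below by simp
    with that show False
      by simp
  qed
qed

lemma ereal_le_iff_thresholds:
  fixes a b :: ereal
  shows "a \<le> b \<longleftrightarrow> (\<forall>x. b \<le> ereal x \<longrightarrow> a \<le> ereal x)"
  by (meson ereal_le_real order_trans)

lemma equilibrium_condition_threshold:
  fixes s \<psi> c w E A B :: real
  assumes "0 < s" "1 < \<psi>" "0 \<le> c" "0 \<le> w" "w \<le> 1" "0 \<le> E" "0 < A"
  shows "\<exists>e. e < \<infinity> \<and> (\<forall>x. equilibrium_condition s \<psi> c w (A * x + B) E \<longleftrightarrow> e \<le> ereal x)"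
proof -
  define S where "S = {x. equilibrium_condition s \<psi> c w (A * x + B) E}"
  have "closed S"
    unfolding S_def by (rule closed_equilibrium_condition_affine)
  moreover have "- B / A \<in> S"
    using assms by (simp add: S_def equilibrium_condition_zero)
  moreover have "y \<in> S" if "x \<in> S" "x \<le> y" for x y
  proof -
    have "A * x + B \<le> A * y + B"
      using assms(7) \<open>x \<le> y\<close> by simp
    from equilibrium_condition_mono[OF assms(1-3,5) this] \<open>x \<in> S\<close> show ?thesis
      unfolding S_def by simp
  qed
  ultimately have "\<exists>e. e < \<infinity> \<and> (\<forall>x. x \<in> S \<longleftrightarrow> e \<le> ereal x)"
    by (intro ereal_threshold_exists) auto
  then show ?thesis
    unfolding S_def by simp
qed

lemma RPE_threshold:
  fixes \<beta> \<sigma> \<kappa> \<mu> \<psi> p q \<epsilon>2 :: real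
  assumes "0 < \<kappa>" "0 < \<sigma>" "1 < \<psi>" "0 < \<mu>" "0 \<le> \<epsilon>2" "p \<le> 1" "q \<le> 1" "(p, q) \<noteq> (1, 1)"
  shows "\<exists>e. e < \<infinity> \<and> (\<forall>\<epsilon>1. (\<exists>Y1 Y2. RPE \<beta> \<sigma> \<kappa> \<mu> \<psi> p q \<epsilon>1 \<epsilon>2 Y1 Y2) \<longleftrightarrow> e \<le> ereal \<epsilon>1)
           \<and> (q = 1 \<longrightarrow> e = - \<infinity>)"
proof -
  define K where "K = \<kappa> * \<sigma> * (\<psi> - 1) * \<mu>"
  define E where "E = \<psi> * \<kappa> * \<epsilon>2 + K"
  have RPE: "(\<exists>Y1 Y2. RPE \<beta> \<sigma> \<kappa> \<mu> \<psi> p q \<epsilon>1 \<epsilon>2 Y1 Y2) \<longleftrightarrow>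
      equilibrium_condition (\<kappa> * \<sigma>) \<psi> (1 + \<kappa> * \<sigma>) (qbar p q) (\<psi> * \<kappa> * \<epsilon>1 + K) E" for \<epsilon>1
    unfolding K_def E_def by (rule ex_RPE_iff[OF assms(1-5) qbar_bounds[OF assms(6-8)]])
  have "0 < \<kappa> * \<sigma>" "0 < \<psi> * \<kappa>" "0 < E"
    using assms(1-5) by (simp_all add: E_def K_def add_nonneg_pos)
  then have "\<exists>e. e < \<infinity> \<and> (\<forall>\<epsilon>1. equilibrium_condition (\<kappa> * \<sigma>) \<psi> (1 + \<kappa> * \<sigma>) (qbar p q)
      (\<psi> * \<kappa> * \<epsilon>1 + K) E \<longleftrightarrow> e \<le> ereal \<epsilon>1)"
    using assms(3) qbar_bounds[OF assms(6-8)]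
    by (intro equilibrium_condition_threshold) simp_all
  then obtain e where "e < \<infinity>"
    and e: "\<forall>\<epsilon>1. equilibrium_condition (\<kappa> * \<sigma>) \<psi> (1 + \<kappa> * \<sigma>) (qbar p q) (\<psi> * \<kappa> * \<epsilon>1 + K) E
      \<longleftrightarrow> e \<le> ereal \<epsilon>1"
    by blast
  have "e = - \<infinity>" if "q = 1"
  proof -
    have "qbar p q = 1"
      using qbar_q_eq_1[of p] assms(6,8) that by auto
    then have "equilibrium_condition (\<kappa> * \<sigma>) \<psi> (1 + \<kappa> * \<sigma>) (qbar p q) (\<psi> * \<kappa> * \<epsilon>1 + K) E" for \<epsilon>1
      using \<open>0 < E\<close> by (simp add: equilibrium_condition_full_weight)
    then have "e \<le> ereal \<epsilon>1" for \<epsilon>1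
      using e by blast
    then have "e \<le> - \<infinity>"
      by (rule ereal_le_real)
    then show ?thesis by simp
  qed
  with \<open>e < \<infinity>\<close> e show ?thesis
    unfolding RPE by auto
qed

lemma REE_slope_le_RPE_slope_iff:
  fixes \<beta> s p q :: real
  assumes "0 \<le> \<beta>" "0 < s" "p \<le> 1" "q \<le> 1"
  shows "(2 - p - q) * (1 - \<beta> * (p + q - 1) + s) \<le> 1 + s \<longleftrightarrow> 1 \<le> p + q"
proof -
  have "\<beta> * (p + q - 1) \<le> \<beta>"
    using mult_left_mono[of "p + q - 1" 1 \<beta>] assms(1,3,4) by simp
  then have pos: "0 < 1 + \<beta> + s - \<beta> * (p + q - 1)"
    using assms(1,2) by linarith
  have "(2 - p - q) * (1 - \<beta> * (p + q - 1) + s) \<le> 1 + s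
      \<longleftrightarrow> 0 \<le> (p + q - 1) * (1 + \<beta> + s - \<beta> * (p + q - 1))"
    by (simp add: algebra_simps)
  also have "\<dots> \<longleftrightarrow> 1 \<le> p + q"
    using pos by (simp add: zero_le_mult_iff)
  finally show ?thesis .
qed

lemma REE_imp_RPE:
  fixes \<beta> \<sigma> \<kappa> \<mu> \<psi> p q \<epsilon>1 \<epsilon>2 :: real
  assumes "0 \<le> \<beta>" "\<beta> < 1" "0 < \<kappa>" "0 < \<sigma>" "1 < \<psi>" "0 < \<mu>" "0 \<le> \<epsilon>2"
    and "p \<le> 1" "q \<le> 1" "(p, q) \<noteq> (1, 1)" "1 \<le> p + q"
    and "\<exists>Y1 Y2. REE \<beta> \<sigma> \<kappa> \<mu> \<psi> p q \<epsilon>1 \<epsilon>2 Y1 Y2"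
  shows "\<exists>Y1 Y2. RPE \<beta> \<sigma> \<kappa> \<mu> \<psi> p q \<epsilon>1 \<epsilon>2 Y1 Y2"
proof -
  have "0 < \<kappa> * \<sigma>"
    using assms(3,4) by simp
  have "0 < \<psi> * \<kappa> * \<epsilon>2 + \<kappa> * \<sigma> * (\<psi> - 1) * \<mu>"
    using assms(3-7) by (simp add: add_nonneg_pos)
  moreover have "0 \<le> (2 - p - q) * (1 - \<beta> * (p + q - 1) + \<kappa> * \<sigma>)"
    using REE_coeff_pos[OF assms(1-4,8-10)] by simp
  moreover have "(2 - p - q) * (1 - \<beta> * (p + q - 1) + \<kappa> * \<sigma>) \<le> 1 + \<kappa> * \<sigma>"
    using REE_slope_le_RPE_slope_iff[OF assms(1) \<open>0 < \<kappa> * \<sigma>\<close> assms(8,9)] assms(11) by simp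
  ultimately have "equilibrium_condition (\<kappa> * \<sigma>) \<psi> (1 + \<kappa> * \<sigma>) (qbar p q)
      (\<psi> * \<kappa> * \<epsilon>1 + \<kappa> * \<sigma> * (\<psi> - 1) * \<mu>) (\<psi> * \<kappa> * \<epsilon>2 + \<kappa> * \<sigma> * (\<psi> - 1) * \<mu>)"
    using equilibrium_condition_mono_coeff[OF \<open>0 < \<kappa> * \<sigma>\<close> assms(5) _ _ qbar_bounds[OF assms(8-10)]]
      ex_REE_imp_condition[OF assms(1-5,8-10,12)] by blast
  then show ?thesis
    unfolding ex_RPE_iff[OF assms(3-7) qbar_bounds[OF assms(8-10)]] .
qed

lemma ex_REE_not_RPE:
  fixes \<beta> \<sigma> \<kappa> \<mu> \<psi> p q \<epsilon>2 :: real
  assumes "0 \<le> \<beta>" "\<beta> < 1" "0 < \<kappa>" "0 < \<sigma>" "1 < \<psi>" "0 < \<mu>" "0 \<le> \<epsilon>2"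
    and "p < 1" "q < 1" "p + q < 1"
  shows "\<exists>\<epsilon>1. (\<exists>Y1 Y2. REE \<beta> \<sigma> \<kappa> \<mu> \<psi> p q \<epsilon>1 \<epsilon>2 Y1 Y2) \<and> \<not> (\<exists>Y1 Y2. RPE \<beta> \<sigma> \<kappa> \<mu> \<psi> p q \<epsilon>1 \<epsilon>2 Y1 Y2)"
proof -
  define s where "s = \<kappa> * \<sigma>"
  define K where "K = s * (\<psi> - 1) * \<mu>"
  define E where "E = \<psi> * \<kappa> * \<epsilon>2 + K"
  define c_REE where "c_REE = (2 - p - q) * (1 - \<beta> * (p + q - 1) + s)"
  have "0 < s" "0 < E"
    using assms(3-7) by (simp_all add: s_def E_def K_def add_nonneg_pos)
  have "\<not> c_REE \<le> 1 + s"
    using REE_slope_le_RPE_slope_iff[OF assms(1) \<open>0 < s\<close>, of p q] assms(8-10) by (simp add: c_REE_def)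
  then have "0 \<le> 1 + s" "1 + s < c_REE"
    using \<open>0 < s\<close> by simp_all
  moreover have "0 < qbar p q" "qbar p q < 1"
    using assms(8,9) by (simp_all add: qbar_pos qbar_less_1)
  ultimately obtain X where X: "equilibrium_condition s \<psi> c_REE (qbar p q) X E"
      "\<not> equilibrium_condition s \<psi> (1 + s) (qbar p q) X E"
    using equilibrium_condition_strict_mono_coeff[OF \<open>0 < s\<close> assms(5) _ _ _ _ \<open>0 < E\<close>] by blast
  define \<epsilon>1 where "\<epsilon>1 = (X - K) / (\<psi> * \<kappa>)"
  have X_eq: "\<psi> * \<kappa> * \<epsilon>1 + K = X"
    using assms(3,5) by (simp add: \<epsilon>1_def)
  have "(\<exists>Y1 Y2. REE \<beta> \<sigma> \<kappa> \<mu> \<psi> p q \<epsilon>1 \<epsilon>2 Y1 Y2) \<longleftrightarrow> equilibrium_condition s \<psi> c_REE (qbar p q) X E"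
    unfolding X_eq[symmetric] s_def K_def E_def c_REE_def
    by (rule ex_REE_iff[OF assms(1-7) less_imp_le[OF assms(8)] assms(9)])
  moreover have "(\<exists>Y1 Y2. RPE \<beta> \<sigma> \<kappa> \<mu> \<psi> p q \<epsilon>1 \<epsilon>2 Y1 Y2) \<longleftrightarrow> equilibrium_condition s \<psi> (1 + s) (qbar p q) X E"
    unfolding X_eq[symmetric] s_def K_def E_def
    by (rule ex_RPE_iff[OF assms(3-7) qbar_bounds(1,2)[OF less_imp_le[OF assms(8)] less_imp_le[OF assms(9)]]])
      (use assms(8) in auto)
  ultimately show ?thesis
    using X by blast
qed

lemma REE_imp_RPE_iff:
  fixes \<beta> \<sigma> \<kappa> \<mu> \<psi> p q \<epsilon>2 :: real
  assumes "0 < \<beta>" "\<beta> < 1" "0 < \<kappa>" "0 < \<sigma>" "1 < \<psi>" "0 < \<mu>" "0 \<le> \<epsilon>2"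
    and "0 < p" "p \<le> 1" "0 < q" "q \<le> 1" "(p, q) \<noteq> (1, 1)"
  shows "(\<forall>\<epsilon>1. (\<exists>Y1 Y2. REE \<beta> \<sigma> \<kappa> \<mu> \<psi> p q \<epsilon>1 \<epsilon>2 Y1 Y2) \<longrightarrow> (\<exists>Y1 Y2. RPE \<beta> \<sigma> \<kappa> \<mu> \<psi> p q \<epsilon>1 \<epsilon>2 Y1 Y2))
         \<longleftrightarrow> 1 \<le> p + q"
proof (cases "1 \<le> p + q")
  case True
  then show ?thesis
    using REE_imp_RPE[OF less_imp_le[OF assms(1)] assms(2-7,9,11,12) True] by blast
next
  case False
  then have "p < 1" "q < 1" "p + q < 1"
    using assms(8,10) by auto
  then show ?thesis
    using ex_REE_not_RPE[OF less_imp_le[OF assms(1)] assms(2-7)] False by blast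
qed

theorem proposition3:
  fixes \<beta> \<sigma> \<kappa> \<mu> \<psi> p q \<epsilon>2 :: real
  assumes "0 < \<beta>" "\<beta> < 1" "0 < \<sigma>" "0 < \<kappa>" "0 < \<mu>" "1 < \<psi>"
    and "0 < p" "p \<le> 1" "0 < q" "q \<le> 1" "(p, q) \<noteq> (1, 1)"
    and "0 \<le> \<epsilon>2"
  shows "\<exists>eRPE :: ereal. eRPE < \<infinity> \<and>
           (\<forall>\<epsilon>1. (\<exists>Y1 Y2. RPE \<beta> \<sigma> \<kappa> \<mu> \<psi> p q \<epsilon>1 \<epsilon>2 Y1 Y2) \<longleftrightarrow> eRPE \<le> ereal \<epsilon>1) \<and>
           (q = 1 \<longrightarrow> eRPE = - \<infinity>) \<and>
           (\<forall>eREE :: ereal. eREE < \<infinity> \<and>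
              (\<forall>\<epsilon>1. (\<exists>Y1 Y2. REE \<beta> \<sigma> \<kappa> \<mu> \<psi> p q \<epsilon>1 \<epsilon>2 Y1 Y2) \<longleftrightarrow> eREE \<le> ereal \<epsilon>1)
              \<longrightarrow> (eRPE \<le> eREE \<longleftrightarrow> 1 \<le> p + q))"
proof -
  obtain eRPE where "eRPE < \<infinity>"
    and RPE: "\<forall>\<epsilon>1. (\<exists>Y1 Y2. RPE \<beta> \<sigma> \<kappa> \<mu> \<psi> p q \<epsilon>1 \<epsilon>2 Y1 Y2) \<longleftrightarrow> eRPE \<le> ereal \<epsilon>1"
    and "q = 1 \<longrightarrow> eRPE = - \<infinity>"
    using RPE_threshold[OF assms(4,3,6,5,12,8,10,11)] by blast
  moreover have "eRPE \<le> eREE \<longleftrightarrow> 1 \<le> p + q"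
    if REE: "\<forall>\<epsilon>1. (\<exists>Y1 Y2. REE \<beta> \<sigma> \<kappa> \<mu> \<psi> p q \<epsilon>1 \<epsilon>2 Y1 Y2) \<longleftrightarrow> eREE \<le> ereal \<epsilon>1" for eREE
  proof -
    have "eRPE \<le> eREE \<longleftrightarrow> (\<forall>\<epsilon>1. eREE \<le> ereal \<epsilon>1 \<longrightarrow> eRPE \<le> ereal \<epsilon>1)"
      by (rule ereal_le_iff_thresholds)
    also have "\<dots> \<longleftrightarrow> (\<forall>\<epsilon>1. (\<exists>Y1 Y2. REE \<beta> \<sigma> \<kappa> \<mu> \<psi> p q \<epsilon>1 \<epsilon>2 Y1 Y2)
        \<longrightarrow> (\<exists>Y1 Y2. RPE \<beta> \<sigma> \<kappa> \<mu> \<psi> p q \<epsilon>1 \<epsilon>2 Y1 Y2))"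
      by (simp only: REE RPE)
    also have "\<dots> \<longleftrightarrow> 1 \<le> p + q"
      by (rule REE_imp_RPE_iff[OF assms(1,2,4,3,6,5,12,7-11)])
    finally show ?thesis .
  qed
  ultimately show ?thesis
    by blast
qed

end
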